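(* Let $\star$ be a star operation on an integral domain $R$. If every nonzero finitely generated ideal of $R$ is $\star$-basic (the finite $\star$-basic ideal property), then $R$ is integrally closed.
   Context: A star operation on a domain $R$ with quotient field $K$ is a map $I\mapsto I^\star$ on nonzero fractional ideals with $(aI)^\star=aI^\star$ ($0\ne a\in K$), $R^\star=R$, $I\subseteq I^\star$, $I\subseteq J\Rightarrow I^\star\subseteq J^\star$, $I^{\star\star}=I^\star$. For a nonzero ideal $I$, an ideal $J\subseteq I$ is a $\star$-reduction of $I$ if $(JI^n)^\star=(I^{n+1})^\star$ for some integer $n\ge0$; $I$ is $\star$-basic if every $\star$-reduction $J$ of $I$ satisfies $J^\star=I^\star$. *)

theory Defs
  imports "HOL-Computational_Algebra.Polynomial"
begin

text \<open>The domain R is represented as a subring of a field K (type 'k) such that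
  K is the quotient field of R. Fractional ideals are subsets of K.\<close>

definition is_subring :: "'k::field set \<Rightarrow> bool" where
  "is_subring R \<longleftrightarrow> 0 \<in> R \<and> 1 \<in> R \<and>
     (\<forall>a\<in>R. \<forall>b\<in>R. a + b \<in> R \<and> a - b \<in> R \<and> a * b \<in> R)"

definition quotient_field_of :: "'k::field set \<Rightarrow> bool" where
  "quotient_field_of R \<longleftrightarrow> (\<forall>x. \<exists>a\<in>R. \<exists>b\<in>R. b \<noteq> 0 \<and> x = a / b)"

definition submod :: "'k::field set \<Rightarrow> 'k set \<Rightarrow> bool" where
  "submod R M \<longleftrightarrow> 0 \<in> M \<and> (\<forall>x\<in>M. \<forall>y\<in>M. x + y \<in> M) \<and> (\<forall>r\<in>R. \<forall>x\<in>M. r * x \<in> M)"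

definition rspan :: "'k::field set \<Rightarrow> 'k set \<Rightarrow> 'k set" where
  "rspan R S = \<Inter>{M. submod R M \<and> S \<subseteq> M}"

definition frac_ideal :: "'k::field set \<Rightarrow> 'k set \<Rightarrow> bool" where
  "frac_ideal R I \<longleftrightarrow> submod R I \<and> I \<noteq> {0} \<and>
     (\<exists>d\<in>R. d \<noteq> 0 \<and> (\<lambda>x. d * x) ` I \<subseteq> R)"

definition imul :: "'k::field set \<Rightarrow> 'k set \<Rightarrow> 'k set \<Rightarrow> 'k set" where
  "imul R I J = rspan R {a * b | a b. a \<in> I \<and> b \<in> J}"

primrec ipow :: "'k::field set \<Rightarrow> 'k set \<Rightarrow> nat \<Rightarrow> 'k set" where
  "ipow R I 0 = R"
| "ipow R I (Suc n) = imul R I (ipow R I n)"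

definition star_operation :: "'k::field set \<Rightarrow> ('k set \<Rightarrow> 'k set) \<Rightarrow> bool" where
  "star_operation R st \<longleftrightarrow>
     (\<forall>I. frac_ideal R I \<longrightarrow> frac_ideal R (st I)) \<and>
     (\<forall>I a. frac_ideal R I \<longrightarrow> a \<noteq> 0 \<longrightarrow> st ((\<lambda>x. a * x) ` I) = (\<lambda>x. a * x) ` st I) \<and>
     st R = R \<and>
     (\<forall>I. frac_ideal R I \<longrightarrow> I \<subseteq> st I) \<and>
     (\<forall>I J. frac_ideal R I \<longrightarrow> frac_ideal R J \<longrightarrow> I \<subseteq> J \<longrightarrow> st I \<subseteq> st J) \<and>
     (\<forall>I. frac_ideal R I \<longrightarrow> st (st I) = st I)"

definition is_ideal :: "'k::field set \<Rightarrow> 'k set \<Rightarrow> bool" where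
  "is_ideal R I \<longleftrightarrow> submod R I \<and> I \<subseteq> R"

definition fg_nonzero_ideal :: "'k::field set \<Rightarrow> 'k set \<Rightarrow> bool" where
  "fg_nonzero_ideal R I \<longleftrightarrow> I \<noteq> {0} \<and> (\<exists>S. finite S \<and> S \<subseteq> R \<and> I = rspan R S)"

definition star_reduction :: "'k::field set \<Rightarrow> ('k set \<Rightarrow> 'k set) \<Rightarrow> 'k set \<Rightarrow> 'k set \<Rightarrow> bool" where
  "star_reduction R st J I \<longleftrightarrow> is_ideal R J \<and> J \<noteq> {0} \<and> J \<subseteq> I \<and>
     (\<exists>n. st (imul R J (ipow R I n)) = st (ipow R I (Suc n)))"

definition star_basic :: "'k::field set \<Rightarrow> ('k set \<Rightarrow> 'k set) \<Rightarrow> 'k set \<Rightarrow> bool" where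
  "star_basic R st I \<longleftrightarrow> (\<forall>J. star_reduction R st J I \<longrightarrow> st J = st I)"

definition integrally_closed :: "'k::field set \<Rightarrow> bool" where
  "integrally_closed R \<longleftrightarrow>
     (\<forall>x. (\<exists>p. lead_coeff p = 1 \<and> (\<forall>i. coeff p i \<in> R) \<and> poly p x = 0) \<longrightarrow> x \<in> R)"

end

theory Submission
  imports Defs
begin

text \<open>If x is integral over R, then A = R[x] is a finitely generated R-module closed under
  multiplication, and writing x = a/b, the nonzero element d = b^(n-1) clears all denominators
  of A. Hence I = dA is a finitely generated ideal, and dR is a reduction of it:
  (dR)I = d^2 A = I^2. Since I is \<star>-basic and principal ideals are \<star>-closed,
  I is contained in the \<star>-closure of I, which equals that of dR, i.e. dR itself.
  So dx \<in> dR and x \<in> R.\<close>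

lemma rspan_least: "submod R M \<Longrightarrow> S \<subseteq> M \<Longrightarrow> rspan R S \<subseteq> M"
  unfolding rspan_def by blast

lemma rspan_superset: "S \<subseteq> rspan R S"
  unfolding rspan_def by blast

lemma submod_rspan: "submod R (rspan R S)"
  unfolding rspan_def submod_def by auto

lemma submod_subring: "is_subring R \<Longrightarrow> submod R R"
  unfolding submod_def is_subring_def by auto

lemma submod_sum:
  assumes "submod R M" "finite F" "\<And>i. i \<in> F \<Longrightarrow> f i \<in> M" shows "sum f F \<in> M"
  using assms(2,3) by (induction F rule: finite_induct) (use assms(1) in \<open>auto simp: submod_def\<close>)

lemma submod_image_mult:
  assumes "submod R M" shows "submod R ((*) c ` M)"
  unfolding submod_def
proof (intro conjI ballI)
  show "0 \<in> (*) c ` M" using assms unfolding submod_def by force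
next
  fix u v assume "u \<in> (*) c ` M" "v \<in> (*) c ` M"
  then obtain s t where "s \<in> M" "t \<in> M" "u = c * s" "v = c * t" by blast
  moreover from this have "s + t \<in> M" using assms unfolding submod_def by blast
  ultimately show "u + v \<in> (*) c ` M" by (metis distrib_left imageI)
next
  fix r u assume "r \<in> R" "u \<in> (*) c ` M"
  then obtain s where "s \<in> M" "u = c * s" "r * s \<in> M" using assms unfolding submod_def by blast
  then show "r * u \<in> (*) c ` M" by (metis imageI mult.left_commute)
qed

lemma submod_one_subset: "submod R M \<Longrightarrow> 1 \<in> M \<Longrightarrow> R \<subseteq> M"
  unfolding submod_def by (metis mult_1_right subsetI)

lemma submod_vimage_mult:
  assumes "submod R M" shows "submod R {y. c * y \<in> M}"
  using assms unfolding submod_def by (simp add: distrib_left mult.left_commute)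

lemma rspan_image_mult: "rspan R ((*) d ` S) = (*) d ` rspan R S"
proof
  show "rspan R ((*) d ` S) \<subseteq> (*) d ` rspan R S"
    by (rule rspan_least[OF submod_image_mult[OF submod_rspan]]) (use rspan_superset in blast)
  have "rspan R S \<subseteq> {y. d * y \<in> rspan R ((*) d ` S)}"
    by (rule rspan_least[OF submod_vimage_mult[OF submod_rspan]]) (use rspan_superset in blast)
  then show "(*) d ` rspan R S \<subseteq> rspan R ((*) d ` S)" by blast
qed

lemma imul_eqI:
  assumes "submod R B" "\<And>u v. u \<in> U \<Longrightarrow> v \<in> V \<Longrightarrow> u * v \<in> B"
    and "\<And>w. w \<in> B \<Longrightarrow> \<exists>u\<in>U. \<exists>v\<in>V. w = u * v"
  shows "imul R U V = B"
proof
  show "imul R U V \<subseteq> B"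
    unfolding imul_def by (rule rspan_least[OF assms(1)]) (use assms(2) in blast)
  show "B \<subseteq> imul R U V"
    unfolding imul_def using assms(3) rspan_superset by fast
qed

lemma imul_image_mult: "imul R ((*) c ` U) ((*) e ` V) = (*) (c * e) ` imul R U V"
proof -
  have "{a * b |a b. a \<in> (*) c ` U \<and> b \<in> (*) e ` V} = (*) (c * e) ` {a * b |a b. a \<in> U \<and> b \<in> V}"
  proof (intro equalityI subsetI)
    fix w assume "w \<in> {a * b |a b. a \<in> (*) c ` U \<and> b \<in> (*) e ` V}"
    then obtain a b where "a \<in> U" "b \<in> V" "w = (c * a) * (e * b)" by blast
    then show "w \<in> (*) (c * e) ` {a * b |a b. a \<in> U \<and> b \<in> V}"
      by (intro image_eqI[of _ _ "a * b"]) (auto simp: ac_simps)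
  next
    fix w assume "w \<in> (*) (c * e) ` {a * b |a b. a \<in> U \<and> b \<in> V}"
    then obtain a b where "a \<in> U" "b \<in> V" "w = (c * e) * (a * b)" by blast
    then show "w \<in> {a * b |a b. a \<in> (*) c ` U \<and> b \<in> (*) e ` V}"
      by (intro CollectI exI[of _ "c * a"] exI[of _ "e * b"]) (auto simp: ac_simps)
  qed
  then show ?thesis unfolding imul_def by (simp add: rspan_image_mult)
qed

lemma imul_subring_left:
  assumes "is_subring R" "submod R M" shows "imul R R M = M"
  using assms by (intro imul_eqI) (auto simp: submod_def is_subring_def intro: bexI[of _ 1])

lemma imul_subring_right:
  assumes "is_subring R" "submod R M" shows "imul R M R = M"
proof (rule imul_eqI[OF assms(2)])
  show "u * v \<in> M" if "u \<in> M" "v \<in> R" for u v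
    using assms(2) that unfolding submod_def by (metis mult.commute)
  show "\<exists>u\<in>M. \<exists>v\<in>R. w = u * v" if "w \<in> M" for w
    using assms(1) that unfolding is_subring_def by force
qed

lemma imul_self_eq:
  assumes "submod R A" "1 \<in> A" "\<And>u v. u \<in> A \<Longrightarrow> v \<in> A \<Longrightarrow> u * v \<in> A"
  shows "imul R A A = A"
  using assms by (intro imul_eqI) (auto intro: bexI[of _ 1])

lemma subring_power_closed: "is_subring R \<Longrightarrow> a \<in> R \<Longrightarrow> a ^ k \<in> R"
  by (induction k) (auto simp: is_subring_def)

lemma power_in_rspan_powers: "i < n \<Longrightarrow> x ^ i \<in> rspan R ((^) x ` {..<n})"
  using rspan_superset by fast

lemma power_degree_in_rspan_powers:
  assumes "is_subring R" "lead_coeff p = 1" "\<forall>i. coeff p i \<in> R" "poly p x = 0"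
  shows "x ^ degree p \<in> rspan R ((^) x ` {..<degree p})"
proof -
  let ?n = "degree p"
  have "0 = (\<Sum>i<?n. coeff p i * x ^ i) + x ^ ?n"
    using assms(2,4) by (simp add: poly_altdef lessThan_Suc_atMost[symmetric])
  then have "x ^ ?n = (\<Sum>i<?n. (- coeff p i) * x ^ i)"
    by (simp add: sum_negf eq_neg_iff_add_eq_0 add.commute)
  also have "\<dots> \<in> rspan R ((^) x ` {..<?n})"
  proof (rule submod_sum[OF submod_rspan])
    fix i assume "i \<in> {..<?n}"
    then have "x ^ i \<in> rspan R ((^) x ` {..<?n})"
      by (simp add: power_in_rspan_powers)
    moreover have "0 - coeff p i \<in> R"
      using assms(1,3) unfolding is_subring_def by blast
    ultimately show "(- coeff p i) * x ^ i \<in> rspan R ((^) x ` {..<?n})"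
      using submod_rspan[of R "(^) x ` {..<?n}"] unfolding submod_def diff_0 by blast
  qed simp
  finally show ?thesis .
qed

lemma rspan_powers_mult_base:
  assumes "x ^ n \<in> rspan R ((^) x ` {..<n})" "y \<in> rspan R ((^) x ` {..<n})"
  shows "x * y \<in> rspan R ((^) x ` {..<n})"
proof -
  have "rspan R ((^) x ` {..<n}) \<subseteq> {y. x * y \<in> rspan R ((^) x ` {..<n})}"
  proof (rule rspan_least[OF submod_vimage_mult[OF submod_rspan]])
    have "x * x ^ i \<in> rspan R ((^) x ` {..<n})" if "i < n" for i
      using that assms(1) power_in_rspan_powers[of "Suc i" n x] by (cases "Suc i = n") auto
    then show "(^) x ` {..<n} \<subseteq> {y. x * y \<in> rspan R ((^) x ` {..<n})}" by auto
  qed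
  then show ?thesis using assms(2) by blast
qed

lemma rspan_powers_mult_closed:
  assumes "x ^ n \<in> rspan R ((^) x ` {..<n})"
    and "u \<in> rspan R ((^) x ` {..<n})" "v \<in> rspan R ((^) x ` {..<n})"
  shows "u * v \<in> rspan R ((^) x ` {..<n})"
proof -
  have "x ^ j * u \<in> rspan R ((^) x ` {..<n})" for j
    by (induction j) (simp_all add: assms(2) rspan_powers_mult_base[OF assms(1)] mult.assoc)
  then have "rspan R ((^) x ` {..<n}) \<subseteq> {v. u * v \<in> rspan R ((^) x ` {..<n})}"
    by (intro rspan_least[OF submod_vimage_mult[OF submod_rspan]]) (auto simp: mult.commute)
  then show ?thesis using assms(3) by blast
qed

lemma rspan_powers_denominator:
  assumes "is_subring R" "a \<in> R" "b \<in> R" "b \<noteq> 0"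
  shows "(*) (b ^ (n - 1)) ` rspan R ((^) (a / b) ` {..<n}) \<subseteq> R"
proof -
  have "b ^ (n - 1) * (a / b) ^ i \<in> R" if "i < n" for i
  proof -
    have "b ^ (n - 1) * (a / b) ^ i = a ^ i * b ^ (n - 1 - i)"
      using that assms(4) by (simp add: power_divide power_add[symmetric] field_simps)
    then show ?thesis
      using assms subring_power_closed unfolding is_subring_def by metis
  qed
  then have "rspan R ((^) (a / b) ` {..<n}) \<subseteq> {y. b ^ (n - 1) * y \<in> R}"
    by (intro rspan_least[OF submod_vimage_mult[OF submod_subring[OF assms(1)]]]) auto
  then show ?thesis by blast
qed

lemma integral_element_ring:
  assumes "is_subring R" "quotient_field_of R"
    and "lead_coeff p = 1" "\<forall>i. coeff p i \<in> R" "poly p x = 0"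
  obtains S d where "finite S" "1 \<in> rspan R S" "x \<in> rspan R S"
    "\<And>u v. u \<in> rspan R S \<Longrightarrow> v \<in> rspan R S \<Longrightarrow> u * v \<in> rspan R S"
    "d \<in> R" "d \<noteq> 0" "(*) d ` rspan R S \<subseteq> R"
proof -
  let ?n = "degree p"
  let ?S = "(^) x ` {..<?n}"
  have top: "x ^ ?n \<in> rspan R ?S"
    using power_degree_in_rspan_powers[OF assms(1,3-5)] .
  have "?n \<noteq> 0"
    by (rule ccontr) (use assms(3,5) in \<open>auto simp: poly_altdef\<close>)
  then have one: "1 \<in> rspan R ?S"
    using power_in_rspan_powers[of 0 ?n x] by simp
  obtain a b where ab: "a \<in> R" "b \<in> R" "b \<noteq> 0" "x = a / b"
    using assms(2) unfolding quotient_field_of_def by blast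
  show thesis
  proof
    show "x \<in> rspan R ?S"
      using rspan_powers_mult_base[OF top one] by simp
    show "(*) (b ^ (?n - 1)) ` rspan R ?S \<subseteq> R"
      using rspan_powers_denominator[OF assms(1) ab(1-3)] ab(4) by simp
    show "b ^ (?n - 1) \<in> R"
      using subring_power_closed[OF assms(1) ab(2)] .
  qed (use one rspan_powers_mult_closed[OF top] ab(3) in auto)
qed

lemma frac_ideal_ideal:
  assumes "is_subring R" "is_ideal R I" "I \<noteq> {0}" shows "frac_ideal R I"
  unfolding frac_ideal_def
  by (intro conjI bexI[of _ 1]) (use assms in \<open>auto simp: is_ideal_def is_subring_def\<close>)

lemma is_ideal_subring: "is_subring R \<Longrightarrow> is_ideal R R"
  unfolding is_ideal_def using submod_subring by blast

lemma is_ideal_principal: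
  assumes "is_subring R" "d \<in> R" shows "is_ideal R ((*) d ` R)"
  using assms submod_image_mult[OF submod_subring] unfolding is_ideal_def is_subring_def by auto

lemma star_extensive: "star_operation R st \<Longrightarrow> frac_ideal R I \<Longrightarrow> I \<subseteq> st I"
  unfolding star_operation_def by (elim conjE) simp

lemma star_principal:
  assumes "star_operation R st" "is_subring R" "d \<noteq> 0" shows "st ((*) d ` R) = (*) d ` R"
proof -
  have "R \<noteq> {0}"
    using assms(2) unfolding is_subring_def by (metis one_neq_zero singletonD)
  then have "frac_ideal R R"
    using frac_ideal_ideal[OF assms(2) is_ideal_subring[OF assms(2)]] by blast
  moreover have "st ((*) d ` R) = (*) d ` st R" "st R = R"
    if "frac_ideal R R"
    using assms(1,3) that unfolding star_operation_def by (elim conjE; simp)+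
  ultimately show ?thesis by simp
qed

lemma star_reduction_principal:
  assumes "is_subring R" "is_ideal R I" "d \<in> R" "d \<noteq> 0" "(*) d ` R \<subseteq> I"
    and "imul R ((*) d ` R) I = imul R I I"
  shows "star_reduction R st ((*) d ` R) I"
  unfolding star_reduction_def
proof (intro conjI exI)
  have "d * 1 \<in> (*) d ` R"
    using assms(1) unfolding is_subring_def by blast
  then show "(*) d ` R \<noteq> {0}" using assms(4) by auto
  have "ipow R I 1 = I"
    using imul_subring_right[OF assms(1)] assms(2) unfolding is_ideal_def by simp
  then show "st (imul R ((*) d ` R) (ipow R I 1)) = st (ipow R I (Suc 1))"
    using assms(6) by simp
qed (use assms is_ideal_principal in auto)

lemma star_basic_principal_reduction:
  assumes "star_operation R st" "is_subring R" "is_ideal R I" "star_basic R st I"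
    and "d \<in> R" "d \<noteq> 0" "(*) d ` R \<subseteq> I" "imul R ((*) d ` R) I = imul R I I"
  shows "I \<subseteq> (*) d ` R"
proof -
  have reduction: "star_reduction R st ((*) d ` R) I"
    using star_reduction_principal[OF assms(2,3,5-8)] .
  have "d * 1 \<in> I"
    using assms(2,7) unfolding is_subring_def by blast
  then have "I \<noteq> {0}"
    using assms(6) by auto
  then have "I \<subseteq> st I"
    by (rule star_extensive[OF assms(1) frac_ideal_ideal[OF assms(2,3)]])
  also have "st I = st ((*) d ` R)"
    using assms(4) reduction unfolding star_basic_def by metis
  also have "\<dots> = (*) d ` R"
    using star_principal[OF assms(1,2,6)] .
  finally show ?thesis .
qed

lemma scaled_algebra_ideal:
  assumes "is_subring R" "finite S" "1 \<in> rspan R S"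
    and "\<And>u v. u \<in> rspan R S \<Longrightarrow> v \<in> rspan R S \<Longrightarrow> u * v \<in> rspan R S"
    and "d \<in> R" "d \<noteq> 0" "(*) d ` rspan R S \<subseteq> R"
  shows "is_ideal R ((*) d ` rspan R S)" "fg_nonzero_ideal R ((*) d ` rspan R S)"
    and "(*) d ` R \<subseteq> (*) d ` rspan R S"
    and "imul R ((*) d ` R) ((*) d ` rspan R S) = imul R ((*) d ` rspan R S) ((*) d ` rspan R S)"
proof -
  show "is_ideal R ((*) d ` rspan R S)"
    unfolding is_ideal_def using submod_image_mult[OF submod_rspan] assms(7) by blast
  show "(*) d ` R \<subseteq> (*) d ` rspan R S"
    using submod_one_subset[OF submod_rspan assms(3)] by blast
  show "fg_nonzero_ideal R ((*) d ` rspan R S)"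
    unfolding fg_nonzero_ideal_def
  proof (intro conjI exI)
    have "d * 1 \<in> (*) d ` rspan R S"
      using assms(3) by blast
    then show "(*) d ` rspan R S \<noteq> {0}"
      using assms(6) by auto
    show "(*) d ` S \<subseteq> R"
      using assms(7) rspan_superset[of S R] by blast
  qed (simp_all add: assms(2) rspan_image_mult)
  show "imul R ((*) d ` R) ((*) d ` rspan R S) = imul R ((*) d ` rspan R S) ((*) d ` rspan R S)"
    unfolding imul_image_mult
    by (simp add: imul_subring_left[OF assms(1) submod_rspan] imul_self_eq[OF submod_rspan assms(3,4)])
qed

theorem lemma1p3:
  fixes R :: "'k::field set" and st :: "'k set \<Rightarrow> 'k set"
  assumes "is_subring R"
    and "quotient_field_of R"
    and "star_operation R st"
    and "\<forall>I. is_ideal R I \<and> fg_nonzero_ideal R I \<longrightarrow> star_basic R st I"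
  shows "integrally_closed R"
  unfolding integrally_closed_def
proof (intro allI impI)
  fix x :: 'k
  assume "\<exists>p. lead_coeff p = 1 \<and> (\<forall>i. coeff p i \<in> R) \<and> poly p x = 0"
  then obtain p where p: "lead_coeff p = 1" "\<forall>i. coeff p i \<in> R" "poly p x = 0"
    by blast
  obtain S d where S: "finite S" "1 \<in> rspan R S" "x \<in> rspan R S"
      "\<And>u v. u \<in> rspan R S \<Longrightarrow> v \<in> rspan R S \<Longrightarrow> u * v \<in> rspan R S"
    and d: "d \<in> R" "d \<noteq> 0" "(*) d ` rspan R S \<subseteq> R"
    using integral_element_ring[OF assms(1,2) p] by blast
  note I = scaled_algebra_ideal[OF assms(1) S(1,2,4) d]
  have "star_basic R st ((*) d ` rspan R S)"
    using assms(4) I(1,2) by blast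
  then have "(*) d ` rspan R S \<subseteq> (*) d ` R"
    using star_basic_principal_reduction[OF assms(3,1) I(1) _ d(1,2) I(3,4)] by blast
  moreover have "d * x \<in> (*) d ` rspan R S"
    using S(3) by blast
  ultimately show "x \<in> R"
    using d(2) by auto
qed

end
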